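(* Let $\mathcal{X}$ be a finite set, $\underline{Q}$ a lower transition rate operator on $\mathcal{L}(\mathcal{X})$, $t>0$, and let $\Gamma\colon[0,t]\to\mathcal{L}(\mathcal{X})$ be continuously differentiable with $\frac{d}{ds}\Gamma(s)\ge\underline{Q}\Gamma(s)$ (pointwise) for all $s\in[0,t]$. Then $\min\Gamma(t)\ge\min\Gamma(0)$.
   Context: $\mathcal{L}(\mathcal{X})$ is the set of real-valued functions on $\mathcal{X}$ (identified with $\mathbb{R}^{\mathcal{X}}$) with pointwise operations and order, real constants identified with constant functions, $\mathbb{I}_y$ the indicator of $\{y\}$. A lower transition rate operator is a map $\underline{Q}\colon\mathcal{L}(\mathcal{X})\to\mathcal{L}(\mathcal{X})$ such that for all $f,g$, $\lambda\ge0$, $\mu\in\mathbb{R}$, $x,y\in\mathcal{X}$: $\underline{Q}(\mu)=0$; $\underline{Q}(f+g)\ge\underline{Q}f+\underline{Q}g$; $\underline{Q}(\lambda f)=\lambda\underline{Q}f$; $x\ne y\Rightarrow\underline{Q}(\mathbb{I}_y)(x)\ge0$. *)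

theory Defs
  imports "HOL-Analysis.Analysis"
begin

text \<open>L(X) is rendered as the function type 'x \<Rightarrow> real with 'x finite.
  A lower transition rate operator, as in the paper.\<close>

definition lower_transition_rate_operator ::
  "(('x \<Rightarrow> real) \<Rightarrow> ('x \<Rightarrow> real)) \<Rightarrow> bool" where
  "lower_transition_rate_operator Q \<longleftrightarrow>
     (\<forall>\<mu>::real. Q (\<lambda>_. \<mu>) = (\<lambda>_. 0)) \<and>
     (\<forall>f g. \<forall>x. Q (\<lambda>z. f z + g z) x \<ge> Q f x + Q g x) \<and>
     (\<forall>f. \<forall>c::real. c \<ge> 0 \<longrightarrow> Q (\<lambda>z. c * f z) = (\<lambda>x. c * Q f x)) \<and>
     (\<forall>x y. x \<noteq> y \<longrightarrow> Q (indicator {y}) x \<ge> 0)"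

end

theory Submission
  imports Defs
begin

text \<open>Perturb \<open>\<Gamma>\<close> to \<open>G s = \<Gamma> s + \<epsilon> s\<close> and look at a pair \<open>(s, x)\<close> minimising \<open>G\<close> jointly
  over \<open>[0, t] \<times> \<X>\<close>. Since \<open>x\<close> minimises \<open>G s = \<Gamma> s + const\<close>, the operator satisfies
  \<open>Q (\<Gamma> s) x \<ge> 0\<close>, so \<open>\<partial>\<^sub>s G s x \<ge> \<epsilon> > 0\<close>; hence \<open>G\<close> is smaller slightly to the left of \<open>s\<close>
  unless \<open>s = 0\<close>. So the minimum is attained at time \<open>0\<close>, which gives
  \<open>min \<Gamma>(t) + \<epsilon> t \<ge> min \<Gamma>(0)\<close>, and \<open>\<epsilon> \<rightarrow> 0\<close> finishes the proof.\<close>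

lemma lower_transition_rate_operator_add_const:
  assumes "lower_transition_rate_operator Q"
  shows "Q (\<lambda>z. f z + c) = Q f"
proof
  fix x
  have superadd: "\<forall>f g. \<forall>x. Q (\<lambda>z. f z + g z) x \<ge> Q f x + Q g x"
    and const: "\<forall>\<mu>::real. Q (\<lambda>_. \<mu>) = (\<lambda>_. 0)"
    using assms unfolding lower_transition_rate_operator_def by auto
  have "Q (\<lambda>z. f z + c) x \<ge> Q f x + Q (\<lambda>_. c) x"
    using superadd by blast
  moreover have "Q (\<lambda>z. (f z + c) + (- c)) x \<ge> Q (\<lambda>z. f z + c) x + Q (\<lambda>_. - c) x"
    using superadd by blast
  ultimately show "Q (\<lambda>z. f z + c) x = Q f x"
    using const by (simp add: fun_eq_iff)
qed

lemma lower_transition_rate_operator_sum: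
  assumes "lower_transition_rate_operator Q" "finite A"
  shows "Q (\<lambda>z. \<Sum>y\<in>A. g y z) x \<ge> (\<Sum>y\<in>A. Q (g y) x)"
  using assms(2)
proof (induction A rule: finite_induct)
  case empty
  then show ?case
    using assms(1) unfolding lower_transition_rate_operator_def by simp
next
  case (insert a A)
  have "Q (\<lambda>z. g a z + (\<Sum>y\<in>A. g y z)) x \<ge> Q (g a) x + Q (\<lambda>z. \<Sum>y\<in>A. g y z) x"
    using assms(1) unfolding lower_transition_rate_operator_def by blast
  with insert show ?case by simp
qed

text \<open>Write \<open>f - f x\<close> as the nonnegative combination \<open>\<Sum>\<^sub>y\<^sub>\<noteq>\<^sub>x (f y - f x) \<one>\<^sub>y\<close>; each summand
  contributes a nonnegative rate at \<open>x\<close>.\<close>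

lemma lower_transition_rate_operator_nonneg_at_min:
  fixes f :: "'x::finite \<Rightarrow> real"
  assumes Q: "lower_transition_rate_operator Q" and min: "\<And>y. f x \<le> f y"
  shows "Q f x \<ge> 0"
proof -
  have hom: "\<forall>f. \<forall>c::real. c \<ge> 0 \<longrightarrow> Q (\<lambda>z. c * f z) = (\<lambda>x. c * Q f x)"
    and off_diag: "\<forall>x y. x \<noteq> y \<longrightarrow> Q (indicator {y}) x \<ge> 0"
    using Q unfolding lower_transition_rate_operator_def by auto
  have decomp: "(\<lambda>z. f z + (- f x)) = (\<lambda>z. \<Sum>y\<in>-{x}. (f y - f x) * indicator {y} z)"
  proof
    fix z
    have "(\<Sum>y\<in>-{x}. (f y - f x) * indicator {y} z) = (\<Sum>y\<in>-{x}. if y = z then f y - f x else 0)"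
      by (rule sum.cong) (auto simp: indicator_def)
    also have "\<dots> = f z + (- f x)"
      by (subst sum.delta) (auto simp: finite_subset[of _ UNIV])
    finally show "f z + (- f x) = (\<Sum>y\<in>-{x}. (f y - f x) * indicator {y} z)" ..
  qed
  have "Q f x = Q (\<lambda>z. \<Sum>y\<in>-{x}. (f y - f x) * indicator {y} z) x"
    using lower_transition_rate_operator_add_const[OF Q, of f "- f x"] decomp by simp
  also have "\<dots> \<ge> (\<Sum>y\<in>-{x}. Q (\<lambda>z. (f y - f x) * indicator {y} z) x)"
    by (rule lower_transition_rate_operator_sum[OF Q]) simp
  finally have "Q f x \<ge> (\<Sum>y\<in>-{x}. Q (\<lambda>z. (f y - f x) * indicator {y} z) x)" .
  moreover have "(\<Sum>y\<in>-{x}. Q (\<lambda>z. (f y - f x) * indicator {y} z) x) \<ge> 0"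
  proof (rule sum_nonneg)
    fix y assume "y \<in> -{x}"
    with min hom off_diag show "Q (\<lambda>z. (f y - f x) * indicator {y} z) x \<ge> 0"
      by simp
  qed
  ultimately show ?thesis by linarith
qed

lemma finite_family_attains_joint_inf:
  fixes G :: "'a::topological_space \<Rightarrow> 'x::finite \<Rightarrow> real"
  assumes "compact S" "S \<noteq> {}" and cont: "\<And>x. continuous_on S (\<lambda>s. G s x)"
  obtains s x where "s \<in> S" "\<And>r z. r \<in> S \<Longrightarrow> G s x \<le> G r z"
proof -
  have "\<exists>s\<in>S. \<forall>r\<in>S. G s x \<le> G r x" for x
    using continuous_attains_inf[OF assms(1,2) cont] .
  then obtain sx where sx: "\<And>x. sx x \<in> S" "\<And>x r. r \<in> S \<Longrightarrow> G (sx x) x \<le> G r x"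
    by metis
  have "Min (range (\<lambda>z. G (sx z) z)) \<in> range (\<lambda>z. G (sx z) z)"
    by (rule Min_in) auto
  then obtain x where x: "G (sx x) x = Min (range (\<lambda>z. G (sx z) z))"
    by (metis (mono_tags, lifting) rangeE)
  have min: "G (sx x) x \<le> G r z" if "r \<in> S" for r z
  proof -
    have "G (sx x) x \<le> G (sx z) z"
      unfolding x by (rule Min_le) auto
    also have "\<dots> \<le> G r z"
      using sx(2)[OF that] .
    finally show ?thesis .
  qed
  show thesis
    by (rule that[OF sx(1) min])
qed

lemma has_real_derivative_pos_not_min_left:
  assumes "(g has_real_derivative D) (at s within {a..b})" "D > 0" "a < s" "s \<le> b"
  obtains r where "r \<in> {a..b}" "g r < g s"
proof -
  obtain d where d: "d > 0" "\<And>h. h > 0 \<Longrightarrow> s - h \<in> {a..b} \<Longrightarrow> h < d \<Longrightarrow> g (s - h) < g s"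
    using has_real_derivative_pos_inc_left[OF assms(1,2)] by blast
  define h where "h = min (d / 2) (s - a)"
  have "h > 0" "s - h \<in> {a..b}" "h < d"
    using d(1) assms(3,4) by (auto simp: h_def)
  with d(2) show thesis
    by (intro that[of "s - h"]) auto
qed

lemma min_principle:
  fixes G G' :: "real \<Rightarrow> 'x::finite \<Rightarrow> real"
  assumes "a \<le> b"
    and deriv: "\<And>x s. s \<in> {a..b} \<Longrightarrow> ((\<lambda>r. G r x) has_real_derivative G' s x) (at s within {a..b})"
    and pos: "\<And>x s. s \<in> {a<..b} \<Longrightarrow> (\<And>z. G s x \<le> G s z) \<Longrightarrow> G' s x > 0"
  shows "Min (range (G a)) \<le> G b y"
proof -
  have "continuous_on {a..b} (\<lambda>s. G s x)" for x
    by (rule DERIV_continuous_on) (rule deriv)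
  then obtain s x where s: "s \<in> {a..b}" and min: "\<And>r z. r \<in> {a..b} \<Longrightarrow> G s x \<le> G r z"
    using finite_family_attains_joint_inf[of "{a..b}" G] \<open>a \<le> b\<close> by auto
  have "s = a"
  proof (rule ccontr)
    assume "s \<noteq> a"
    with s have "s \<in> {a<..b}" by auto
    moreover have "G s x \<le> G s z" for z
      using min s by blast
    ultimately have "G' s x > 0"
      by (rule pos)
    moreover have "a < s" "s \<le> b"
      using \<open>s \<in> {a<..b}\<close> by auto
    ultimately obtain r where "r \<in> {a..b}" "G r x < G s x"
      by (rule has_real_derivative_pos_not_min_left[OF deriv[OF s]])
    with min show False
      by (meson not_less)
  qed
  have "Min (range (G a)) \<le> G a x"
    by (rule Min_le) auto
  also have "\<dots> \<le> G b y"
    using min[of b y] \<open>s = a\<close> \<open>a \<le> b\<close> by simp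
  finally show ?thesis .
qed

theorem lemma3:
  fixes Q :: "('x::finite \<Rightarrow> real) \<Rightarrow> ('x \<Rightarrow> real)"
    and \<Gamma> \<Gamma>' :: "real \<Rightarrow> 'x \<Rightarrow> real"
    and t :: real
  assumes "lower_transition_rate_operator Q"
    and "t > 0"
    and deriv: "\<And>x s. s \<in> {0..t} \<Longrightarrow>
                  ((\<lambda>r. \<Gamma> r x) has_real_derivative \<Gamma>' s x) (at s within {0..t})"
    and cont: "\<And>x. continuous_on {0..t} (\<lambda>s. \<Gamma>' s x)"
    and ineq: "\<And>x s. s \<in> {0..t} \<Longrightarrow> \<Gamma>' s x \<ge> Q (\<Gamma> s) x"
  shows "Min (range (\<Gamma> t)) \<ge> Min (range (\<Gamma> 0))"
proof -
  have perturbed: "Min (range (\<Gamma> 0)) \<le> \<Gamma> t y + e * t" if "e > 0" for e y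
  proof -
    have "Min (range (\<lambda>z. \<Gamma> 0 z + e * 0)) \<le> \<Gamma> t y + e * t"
    proof (rule min_principle[where G' = "\<lambda>s z. \<Gamma>' s z + e"])
      show "((\<lambda>r. \<Gamma> r x + e * r) has_real_derivative \<Gamma>' s x + e) (at s within {0..t})"
        if "s \<in> {0..t}" for x s
        using deriv[OF that] by (auto intro!: derivative_eq_intros)
      show "\<Gamma>' s x + e > 0" if "s \<in> {0<..t}" "\<And>z. \<Gamma> s x + e * s \<le> \<Gamma> s z + e * s" for x s
      proof -
        have "Q (\<Gamma> s) x \<ge> 0"
          using lower_transition_rate_operator_nonneg_at_min[OF assms(1)] that(2) by simp
        moreover have "\<Gamma>' s x \<ge> Q (\<Gamma> s) x"
          using ineq that(1) by simp
        ultimately show ?thesis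
          using \<open>e > 0\<close> by linarith
      qed
    qed (use \<open>t > 0\<close> in auto)
    then show ?thesis by simp
  qed
  have "Min (range (\<Gamma> 0)) \<le> \<Gamma> t y" for y
  proof (rule field_le_epsilon)
    fix e :: real assume "e > 0"
    then show "Min (range (\<Gamma> 0)) \<le> \<Gamma> t y + e"
      using perturbed[of "e / t" y] \<open>t > 0\<close> by simp
  qed
  moreover have "Min (range (\<Gamma> t)) \<in> range (\<Gamma> t)"
    by (rule Min_in) auto
  ultimately show ?thesis by auto
qed

end
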